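(* In the setting below, with $Q=L/\mu$ and $K\ge 1$, let $a\ge3$ be an integer, let \[ \overline{\eta}_a=\Big(\frac{1}{144(aK+1)KQ^2}\Big)^{\frac{1}{a-2}}, \] and suppose the step size satisfies $0<\eta\le\frac{1}{3L(K+1)}\overline{\eta}_a$. Then for every integer $k\ge aK+1$, \[ F_k\le\Big(1-\eta\frac{\mu}{18}\Big)^{\frac{k+1}{aK+1}-1}\Big(\max_{0\le j\le aK}F_j\Big). \]
   Context: Let $m,n\ge 1$ be integers and $\|\cdot\|$ the Euclidean norm on $\mathbb{R}^n$. For $i=1,\dots,m$, let $f_i:\mathbb{R}^n\to\mathbb{R}$ be continuously differentiable with $\|\nabla f_i(x)-\nabla f_i(y)\|\le L_i\|x-y\|$ for all $x,y$, where $L_i\ge 0$ (the $f_i$ are not assumed convex). Let $f=\frac1m\sum_{i=1}^m f_i$ and $L=\frac1m\sum_{i=1}^m L_i$. Assume $f$ is $\mu$-strongly convex for some $\mu>0$ (i.e. $x\mapsto f(x)-\frac{\mu}{2}\|x\|^2$ is convex). Let $r:\mathbb{R}^n\to(-\infty,\infty]$ be proper, closed and convex, let $F=f+r$, and let $x^*$ be the unique minimizer of $F$. For $\eta>0$ define $\mathrm{prox}_r^\eta(y)=\arg\min_{x\in\mathbb{R}^n}\{\frac12\|x-y\|^2+\eta r(x)\}$. PIAG method: fix an integer $K$, a step size $\eta>0$ and $x_0\in\mathbb{R}^n$; for each $k\ge0$ and each $i$ let $\tau_{i,k}$ be any (deterministically chosen) integer with $\max(k-K,0)\le\tau_{i,k}\le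 k$; set $g_k=\frac1m\sum_{i=1}^m\nabla f_i(x_{\tau_{i,k}})$ and $x_{k+1}=\mathrm{prox}_r^\eta(x_k-\eta g_k)$. Define $F_k=F(x_k)-F(x^* )$. *)

theory Defs
  imports "HOL-Analysis.Analysis" "HOL-Library.Extended_Real"
begin

definition epigraph_ext :: "('a \<Rightarrow> ereal) \<Rightarrow> ('a \<times> real) set" where
  "epigraph_ext r = {(x, t). r x \<le> ereal t}"

definition proper_closed_convex :: "('a::euclidean_space \<Rightarrow> ereal) \<Rightarrow> bool" where
  "proper_closed_convex r \<longleftrightarrow>
     (\<forall>x. r x \<noteq> -\<infinity>) \<and> (\<exists>x. r x \<noteq> \<infinity>) \<and>
     closed (epigraph_ext r) \<and> convex (epigraph_ext r)"

definition prox :: "('a::euclidean_space \<Rightarrow> ereal) \<Rightarrow> real \<Rightarrow> 'a \<Rightarrow> 'a" where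
  "prox r \<eta> y = (THE x. \<forall>z. ereal ((1/2) * (norm (x - y))\<^sup>2) + ereal \<eta> * r x
                              \<le> ereal ((1/2) * (norm (z - y))\<^sup>2) + ereal \<eta> * r z)"

end

theory Submission
  imports Defs
begin

text \<open>
  With \<open>\<theta> = \<eta>\<mu> / (1 + \<eta>\<mu> + \<eta>L)\<close>, comparing the prox step with the convex combination
  \<open>(1 - \<theta>) x\<^sub>k + \<theta> x\<^sup>*\<close> and using smoothness and strong convexity of \<open>f\<close> gives
  \<open>F\<^sub>k\<^sub>+\<^sub>1 \<le> (1 - \<theta>) F\<^sub>k + \<alpha> T\<^sub>k - \<gamma> \<parallel>x\<^sub>k\<^sub>+\<^sub>1 - x\<^sub>k\<parallel>\<^sup>2\<close>, where the error of the delayed gradient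
  is paid for by \<open>T\<^sub>k\<close>, the sum of the last \<open>K\<close> squared step lengths. Adding a weighted sum of
  these step lengths gives a Lyapunov function that contracts by \<open>1 - \<theta>\<close> at every step as soon as
  \<open>\<eta> L (K + 1) \<le> 1/3\<close>; the step-size hypothesis implies this because \<open>\<mu> \<le> L\<close> makes the
  factor \<open>\<eta>\<^sub>a\<close> at most 1. Hence
  \<open>F\<^sub>k \<le> (1 - \<eta>\<mu>/18)\<^sup>k F\<^sub>0\<close>, which is stronger than the claimed bound.
\<close>

lemma power2_norm_add:
  "(norm (a + b))\<^sup>2 = (norm a)\<^sup>2 + 2 * (a \<bullet> b) + (norm (b::'a::real_inner))\<^sup>2"
  by (simp add: power2_norm_eq_inner inner_add_left inner_add_right inner_commute)

lemma power2_norm_convex_combination: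
  "(norm ((1 - t) *\<^sub>R a + t *\<^sub>R b))\<^sup>2
     = (1 - t) * (norm a)\<^sup>2 + t * (norm (b::'a::real_inner))\<^sup>2 - t * (1 - t) * (norm (a - b))\<^sup>2"
  by (simp add: power2_norm_eq_inner inner_commute algebra_simps)

lemma inner_le_young:
  fixes e w :: "'a::real_inner"
  assumes "c > 0"
  shows "e \<bullet> w \<le> c / 2 * (norm e)\<^sup>2 + 1 / (2 * c) * (norm w)\<^sup>2"
proof -
  have "(norm (c *\<^sub>R e - w))\<^sup>2 = c\<^sup>2 * (norm e)\<^sup>2 - 2 * c * (e \<bullet> w) + (norm w)\<^sup>2"
    by (simp add: power2_norm_eq_inner inner_diff_left inner_diff_right inner_commute)
      (simp add: power2_eq_square)
  then have "0 \<le> (c\<^sup>2 * (norm e)\<^sup>2 - 2 * c * (e \<bullet> w) + (norm w)\<^sup>2) / (2 * c)"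
    using assms by (metis divide_nonneg_pos zero_le_power2 zero_less_mult_iff zero_less_numeral)
  also have "\<dots> = c / 2 * (norm e)\<^sup>2 - e \<bullet> w + 1 / (2 * c) * (norm w)\<^sup>2"
    using assms by (simp add: field_simps power2_eq_square)
  finally show ?thesis by simp
qed

lemma norm_diff_le_sum_steps:
  fixes x :: "nat \<Rightarrow> 'a::real_normed_vector"
  assumes "s \<le> k"
  shows "norm (x k - x (k - s)) \<le> (\<Sum>d<s. norm (x (k - d) - x (k - Suc d)))"
  using assms
proof (induction s)
  case (Suc s)
  have "norm (x k - x (k - Suc s)) \<le> norm (x k - x (k - s)) + norm (x (k - s) - x (k - Suc s))"
    using norm_triangle_ineq[of "x k - x (k - s)" "x (k - s) - x (k - Suc s)"] by simp
  with Suc show ?case by simp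
qed simp

lemma lipschitz_gradient_upper_bound:
  fixes \<phi> :: "'a::euclidean_space \<Rightarrow> real"
  assumes der: "\<And>y. (\<phi> has_derivative (\<lambda>h. G y \<bullet> h)) (at y)"
    and lip: "\<And>y z. norm (G y - G z) \<le> Lc * norm (y - z)"
  shows "\<phi> z \<le> \<phi> y + G y \<bullet> (z - y) + Lc / 2 * (norm (z - y))\<^sup>2"
proof -
  define d where "d = z - y"
  define p where "p = (\<lambda>t. \<phi> (y + t *\<^sub>R d) - t * (G y \<bullet> d) - Lc / 2 * t\<^sup>2 * (norm d)\<^sup>2)"
  have "p 1 \<le> p 0"
  proof (rule DERIV_nonpos_imp_nonincreasing[of 0 1])
    fix t :: real assume t: "0 \<le> t" "t \<le> 1"
    have "((\<lambda>t. \<phi> (y + t *\<^sub>R d)) has_derivative (\<lambda>s. G (y + t *\<^sub>R d) \<bullet> (s *\<^sub>R d))) (at t)"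
      by (rule has_derivative_compose[OF _ der]) (auto intro!: derivative_eq_intros)
    then have "((\<lambda>t. \<phi> (y + t *\<^sub>R d)) has_derivative (*) (G (y + t *\<^sub>R d) \<bullet> d)) (at t)"
      by (rule has_derivative_eq_rhs) (simp add: fun_eq_iff)
    then have d: "((\<lambda>t. \<phi> (y + t *\<^sub>R d)) has_real_derivative G (y + t *\<^sub>R d) \<bullet> d) (at t)"
      by (simp add: has_field_derivative_def)
    have "(p has_real_derivative
        G (y + t *\<^sub>R d) \<bullet> d - G y \<bullet> d - Lc / 2 * (2 * t) * (norm d)\<^sup>2) (at t)"
      unfolding p_def by (rule derivative_eq_intros d | simp)+
    moreover have "G (y + t *\<^sub>R d) \<bullet> d - G y \<bullet> d \<le> Lc * t * (norm d)\<^sup>2"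
    proof -
      have "G (y + t *\<^sub>R d) \<bullet> d - G y \<bullet> d \<le> norm (G (y + t *\<^sub>R d) - G y) * norm d"
        by (metis inner_diff_left norm_cauchy_schwarz)
      also have "\<dots> \<le> Lc * norm (t *\<^sub>R d) * norm d"
        using lip[of "y + t *\<^sub>R d" y] by (simp add: mult_right_mono)
      finally show ?thesis using t by (simp add: power2_eq_square)
    qed
    ultimately show "\<exists>D. (p has_real_derivative D) (at t) \<and> D \<le> 0" by force
  qed simp
  then show ?thesis unfolding p_def d_def by simp
qed

lemma lipschitz_gradient_quadratic_bound:
  fixes \<phi> :: "'a::euclidean_space \<Rightarrow> real"
  assumes der: "\<And>y. (\<phi> has_derivative (\<lambda>h. G y \<bullet> h)) (at y)"
    and lip: "\<And>y z. norm (G y - G z) \<le> Lc * norm (y - z)"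
  shows "\<bar>\<phi> z - \<phi> y - G y \<bullet> (z - y)\<bar> \<le> Lc / 2 * (norm (z - y))\<^sup>2"
proof -
  have "((\<lambda>x. - \<phi> x) has_derivative (\<lambda>h. - G y \<bullet> h)) (at y)" for y
    using has_derivative_minus[OF der[of y]] by simp
  moreover have "norm (- G y - - G z) \<le> Lc * norm (y - z)" for y z
    using lip[of y z] by (simp add: norm_minus_commute)
  ultimately have "- \<phi> z \<le> - \<phi> y + - G y \<bullet> (z - y) + Lc / 2 * (norm (z - y))\<^sup>2"
    by (rule lipschitz_gradient_upper_bound)
  with lipschitz_gradient_upper_bound[OF der lip, of z y] show ?thesis
    by (intro abs_leI) auto
qed

lemma sum_lipschitz_gradient_quadratic_bound:
  fixes \<phi> :: "'i \<Rightarrow> 'a::euclidean_space \<Rightarrow> real"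
  assumes der: "\<And>i y. i \<in> I \<Longrightarrow> (\<phi> i has_derivative (\<lambda>h. G i y \<bullet> h)) (at y)"
    and lip: "\<And>i y z. i \<in> I \<Longrightarrow> norm (G i y - G i z) \<le> Lc i * norm (y - z)"
  shows "\<bar>(\<Sum>i\<in>I. \<phi> i z) - (\<Sum>i\<in>I. \<phi> i y) - (\<Sum>i\<in>I. G i y) \<bullet> (z - y)\<bar>
           \<le> (\<Sum>i\<in>I. Lc i) / 2 * (norm (z - y))\<^sup>2"
proof -
  have "\<bar>(\<Sum>i\<in>I. \<phi> i z) - (\<Sum>i\<in>I. \<phi> i y) - (\<Sum>i\<in>I. G i y) \<bullet> (z - y)\<bar>
      = \<bar>\<Sum>i\<in>I. \<phi> i z - \<phi> i y - G i y \<bullet> (z - y)\<bar>"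
    by (simp add: sum_subtractf inner_sum_left)
  also have "\<dots> \<le> (\<Sum>i\<in>I. \<bar>\<phi> i z - \<phi> i y - G i y \<bullet> (z - y)\<bar>)"
    by (rule sum_abs)
  also have "\<dots> \<le> (\<Sum>i\<in>I. Lc i / 2 * (norm (z - y))\<^sup>2)"
    by (intro sum_mono lipschitz_gradient_quadratic_bound der lip)
  also have "\<dots> = (\<Sum>i\<in>I. Lc i) / 2 * (norm (z - y))\<^sup>2"
    by (simp add: sum_distrib_right sum_divide_distrib)
  finally show ?thesis .
qed

lemma sum_lipschitz_gradient_perturbation:
  fixes G :: "'i \<Rightarrow> 'a::real_normed_vector \<Rightarrow> 'b::real_normed_vector"
  assumes lip: "\<And>i y z. i \<in> I \<Longrightarrow> norm (G i y - G i z) \<le> Lc i * norm (y - z)"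
    and Lc: "\<And>i. i \<in> I \<Longrightarrow> Lc i \<ge> 0"
    and near: "\<And>i. i \<in> I \<Longrightarrow> norm (w i - y) \<le> B"
  shows "norm ((\<Sum>i\<in>I. G i (w i)) - (\<Sum>i\<in>I. G i y)) \<le> (\<Sum>i\<in>I. Lc i) * B"
proof -
  have "norm ((\<Sum>i\<in>I. G i (w i)) - (\<Sum>i\<in>I. G i y)) \<le> (\<Sum>i\<in>I. norm (G i (w i) - G i y))"
    unfolding sum_subtractf[symmetric] by (rule norm_sum)
  also have "\<dots> \<le> (\<Sum>i\<in>I. Lc i * B)"
  proof (rule sum_mono)
    fix i assume "i \<in> I"
    then show "norm (G i (w i) - G i y) \<le> Lc i * B"
      using lip[of i "w i" y] mult_left_mono[OF near Lc] by (meson order_trans)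
  qed
  finally show ?thesis by (simp add: sum_distrib_right)
qed

lemma proper_closed_convex_ereal_real:
  assumes "proper_closed_convex r" "r x \<noteq> \<infinity>"
  shows "r x = ereal (real_of_ereal (r x))"
  using assms unfolding proper_closed_convex_def by (cases "r x") auto

lemma proper_closed_convex_in_epigraph:
  assumes "proper_closed_convex r" "r x \<noteq> \<infinity>"
  shows "(x, real_of_ereal (r x)) \<in> epigraph_ext r"
  using proper_closed_convex_ereal_real[OF assms] by (simp add: epigraph_ext_def)

lemma proper_closed_convex_le_real:
  assumes "proper_closed_convex r" "r x \<le> ereal t"
  shows "r x \<noteq> \<infinity>" "real_of_ereal (r x) \<le> t"
  using assms unfolding proper_closed_convex_def by (cases "r x"; force)+

lemma proper_closed_convex_convex_combination:
  assumes pcc: "proper_closed_convex r" and x: "r x \<noteq> \<infinity>" and z: "r z \<noteq> \<infinity>"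
    and u: "0 \<le> u" "u \<le> 1"
  shows "r ((1 - u) *\<^sub>R x + u *\<^sub>R z) \<noteq> \<infinity>"
    and "real_of_ereal (r ((1 - u) *\<^sub>R x + u *\<^sub>R z))
           \<le> (1 - u) * real_of_ereal (r x) + u * real_of_ereal (r z)"
proof -
  have "(1 - u) *\<^sub>R (x, real_of_ereal (r x)) + u *\<^sub>R (z, real_of_ereal (r z)) \<in> epigraph_ext r"
    using pcc u proper_closed_convex_in_epigraph[OF pcc] x z
    unfolding proper_closed_convex_def by (intro convexD) auto
  then have "r ((1 - u) *\<^sub>R x + u *\<^sub>R z)
      \<le> ereal ((1 - u) * real_of_ereal (r x) + u * real_of_ereal (r z))"
    by (simp add: epigraph_ext_def)
  then show "r ((1 - u) *\<^sub>R x + u *\<^sub>R z) \<noteq> \<infinity>"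
    and "real_of_ereal (r ((1 - u) *\<^sub>R x + u *\<^sub>R z))
           \<le> (1 - u) * real_of_ereal (r x) + u * real_of_ereal (r z)"
    using proper_closed_convex_le_real[OF pcc] by blast+
qed

lemma proper_closed_convex_affine_minorant:
  fixes r :: "'a::euclidean_space \<Rightarrow> ereal"
  assumes pcc: "proper_closed_convex r"
  obtains c b where "\<And>x. r x \<noteq> \<infinity> \<Longrightarrow> b + c \<bullet> x \<le> real_of_ereal (r x)"
proof -
  obtain x0 where x0: "r x0 \<noteq> \<infinity>"
    using pcc unfolding proper_closed_convex_def by auto
  then obtain v where "r x0 = ereal v"
    using proper_closed_convex_ereal_real[OF pcc] by blast
  then have "(x0, real_of_ereal (r x0) - 1) \<notin> epigraph_ext r"
    by (simp add: epigraph_ext_def)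
  then obtain a b where sep: "a \<bullet> (x0, real_of_ereal (r x0) - 1) < b"
    and above: "\<And>q. q \<in> epigraph_ext r \<Longrightarrow> b < a \<bullet> q"
    using pcc separating_hyperplane_closed_point[of "epigraph_ext r"]
    unfolding proper_closed_convex_def by blast
  obtain a1 a2 where a: "a = (a1, a2)" by (cases a)
  have "b < a1 \<bullet> x0 + a2 * real_of_ereal (r x0)"
    using above[OF proper_closed_convex_in_epigraph[OF pcc x0]] a by simp
  with sep a have a2: "a2 > 0" by (simp add: algebra_simps)
  show ?thesis
  proof
    fix x assume "r x \<noteq> \<infinity>"
    then have "b < a1 \<bullet> x + a2 * real_of_ereal (r x)"
      using above[OF proper_closed_convex_in_epigraph[OF pcc]] a by simp
    with a2 show "b / a2 + (- (1 / a2) *\<^sub>R a1) \<bullet> x \<le> real_of_ereal (r x)"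
      by (simp add: field_simps)
  qed
qed

lemma le_max_one_if_square_le_affine:
  fixes u A B :: real
  assumes "u\<^sup>2 \<le> A * u + B" "0 \<le> A" "0 \<le> B"
  shows "u \<le> max 1 (A + B)"
proof (cases "u \<le> 1")
  case False
  then have "B \<le> B * u"
    using mult_left_mono[of 1 u B] assms(3) by simp
  then have "u * u \<le> (A + B) * u"
    using assms(1) by (simp add: power2_eq_square algebra_simps)
  with False show ?thesis by simp
qed simp

lemma prox_sublevel_bounded:
  fixes r :: "'a::euclidean_space \<Rightarrow> ereal"
  assumes pcc: "proper_closed_convex r" and eta: "\<eta> > 0"
  shows "bounded (epigraph_ext r \<inter> {q. 1/2 * (norm (fst q - y))\<^sup>2 + \<eta> * snd q \<le> \<Phi>})"
proof -
  obtain c b where minor: "\<And>x. r x \<noteq> \<infinity> \<Longrightarrow> b + c \<bullet> x \<le> real_of_ereal (r x)"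
    using proper_closed_convex_affine_minorant[OF pcc] by blast
  define U where "U = max 1 (2 * \<eta> * norm c + \<bar>2 * (\<Phi> - \<eta> * b - \<eta> * (c \<bullet> y))\<bar>)"
  have "(x, t) \<in> cball y U \<times> {b - norm c * (norm y + U) .. \<Phi> / \<eta>}"
    if epi: "r x \<le> ereal t" and sub: "1/2 * (norm (x - y))\<^sup>2 + \<eta> * t \<le> \<Phi>" for x t
  proof -
    have lin: "b + c \<bullet> x \<le> t"
      using minor proper_closed_convex_le_real[OF pcc epi] by fastforce
    define u where "u = norm (x - y)"
    have "- (norm c * u) \<le> c \<bullet> (x - y)"
      using norm_cauchy_schwarz[of "- c" "x - y"] unfolding u_def by simp
    then have "b + c \<bullet> y - norm c * u \<le> t"
      using lin by (simp add: inner_diff_right)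
    then have "\<eta> * (b + c \<bullet> y - norm c * u) \<le> \<eta> * t"
      using eta by (intro mult_left_mono) auto
    then have "u\<^sup>2 \<le> (2 * \<eta> * norm c) * u + 2 * (\<Phi> - \<eta> * b - \<eta> * (c \<bullet> y))"
      using sub unfolding u_def by (simp add: algebra_simps)
    then have "u\<^sup>2 \<le> (2 * \<eta> * norm c) * u + \<bar>2 * (\<Phi> - \<eta> * b - \<eta> * (c \<bullet> y))\<bar>"
      by linarith
    then have xU: "norm (x - y) \<le> U"
      unfolding U_def u_def using eta by (intro le_max_one_if_square_le_affine) auto
    have "- (norm c * norm x) \<le> c \<bullet> x"
      using norm_cauchy_schwarz[of "- c" x] by simp
    moreover have "norm c * norm x \<le> norm c * (norm y + U)"
      using xU norm_triangle_sub[of x y] by (intro mult_left_mono) (auto simp: norm_minus_commute)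
    ultimately have "b - norm c * (norm y + U) \<le> t"
      using lin by linarith
    moreover have "\<eta> * t \<le> \<Phi>"
      using sub zero_le_power2[of "norm (x - y)"] by linarith
    then have "t \<le> \<Phi> / \<eta>"
      using eta by (simp add: field_simps)
    ultimately show ?thesis
      using xU by (simp add: dist_norm norm_minus_commute)
  qed
  then have "epigraph_ext r \<inter> {q. 1/2 * (norm (fst q - y))\<^sup>2 + \<eta> * snd q \<le> \<Phi>}
      \<subseteq> cball y U \<times> {b - norm c * (norm y + U) .. \<Phi> / \<eta>}"
    by (auto simp: epigraph_ext_def)
  then show ?thesis
    by (rule bounded_subset[OF bounded_Times[OF bounded_cball compact_imp_bounded[OF compact_Icc]]])
qed

lemma prox_objective_has_minimizer:
  fixes r :: "'a::euclidean_space \<Rightarrow> ereal"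
  assumes pcc: "proper_closed_convex r" and eta: "\<eta> > 0"
  obtains p where "r p \<noteq> \<infinity>"
    and "\<And>z. r z \<noteq> \<infinity> \<Longrightarrow> 1/2 * (norm (p - y))\<^sup>2 + \<eta> * real_of_ereal (r p)
                              \<le> 1/2 * (norm (z - y))\<^sup>2 + \<eta> * real_of_ereal (r z)"
proof -
  \<comment> \<open>on the epigraph the objective is continuous, and closedness of \<open>r\<close> makes its
    sublevel sets compact\<close>
  define \<psi> where "\<psi> = (\<lambda>q::'a \<times> real. 1/2 * (norm (fst q - y))\<^sup>2 + \<eta> * snd q)"
  have cont: "continuous_on A \<psi>" for A
    unfolding \<psi>_def by (intro continuous_intros)
  obtain x0 where x0: "r x0 \<noteq> \<infinity>"
    using pcc unfolding proper_closed_convex_def by auto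
  define \<Phi> where "\<Phi> = \<psi> (x0, real_of_ereal (r x0))"
  define S where "S = epigraph_ext r \<inter> {q. \<psi> q \<le> \<Phi>}"
  have graph_in_S: "(z, real_of_ereal (r z)) \<in> S" if "r z \<noteq> \<infinity>" "\<psi> (z, real_of_ereal (r z)) \<le> \<Phi>" for z
    using proper_closed_convex_in_epigraph[OF pcc] that unfolding S_def by simp
  have "compact S"
    unfolding compact_eq_bounded_closed
  proof
    show "bounded S"
      using prox_sublevel_bounded[OF pcc eta] by (simp add: S_def \<psi>_def)
    show "closed S"
      unfolding S_def using pcc cont
      by (intro closed_Int closed_Collect_le continuous_on_const) (auto simp: proper_closed_convex_def)
  qed
  moreover have "S \<noteq> {}"
    using graph_in_S[OF x0] \<Phi>_def by auto
  ultimately obtain q where "q \<in> S" and qmin: "\<forall>q'\<in>S. \<psi> q \<le> \<psi> q'"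
    using continuous_attains_inf[OF _ _ cont] by meson
  moreover obtain p t where q: "q = (p, t)" by (cases q)
  ultimately have "r p \<le> ereal t" and q_le: "\<psi> q \<le> \<Phi>"
    by (auto simp: S_def epigraph_ext_def)
  then have p: "r p \<noteq> \<infinity>" "real_of_ereal (r p) \<le> t"
    using proper_closed_convex_le_real[OF pcc] by auto
  show ?thesis
  proof (rule that[OF p(1)])
    fix z assume z: "r z \<noteq> \<infinity>"
    have "\<psi> q \<le> \<psi> (z, real_of_ereal (r z))"
      using qmin graph_in_S[OF z] q_le by (cases "\<psi> (z, real_of_ereal (r z)) \<le> \<Phi>") auto
    moreover have "\<eta> * real_of_ereal (r p) \<le> \<eta> * t"
      using p(2) eta by simp
    ultimately show "1/2 * (norm (p - y))\<^sup>2 + \<eta> * real_of_ereal (r p)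
        \<le> 1/2 * (norm (z - y))\<^sup>2 + \<eta> * real_of_ereal (r z)"
      using q unfolding \<psi>_def by simp
  qed
qed

lemma nonneg_if_nonneg_affine_near_zero:
  fixes A B :: real
  assumes B: "B \<ge> 0" and near: "\<And>t. 0 < t \<Longrightarrow> t \<le> 1 \<Longrightarrow> 0 \<le> A + t * B"
  shows "0 \<le> A"
proof -
  have "- A \<le> 0 + e" if e: "e > 0" for e
  proof -
    define t where "t = min 1 (e / (B + 1))"
    have t: "0 < t" "t \<le> 1" "t \<le> e / (B + 1)"
      using B e unfolding t_def by auto
    have "t * B \<le> e / (B + 1) * B"
      using t B by (intro mult_right_mono) auto
    also have "\<dots> \<le> e"
      using B e by (simp add: field_simps)
    finally show ?thesis
      using near[OF t(1,2)] by linarith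
  qed
  then show ?thesis
    using field_le_epsilon[of "- A" 0] by simp
qed

lemma prox_objective_ereal:
  assumes pcc: "proper_closed_convex r" and eta: "\<eta> > 0"
  shows "ereal a + ereal \<eta> * r x
           = (if r x = \<infinity> then \<infinity> else ereal (a + \<eta> * real_of_ereal (r x)))"
  using eta pcc unfolding proper_closed_convex_def by (cases "r x") auto

lemma minimizer_three_point_inequality:
  fixes r :: "'a::euclidean_space \<Rightarrow> ereal"
  assumes pcc: "proper_closed_convex r" and eta: "\<eta> > 0" and p: "r p \<noteq> \<infinity>"
    and pmin: "\<And>z. r z \<noteq> \<infinity> \<Longrightarrow> 1/2 * (norm (p - y))\<^sup>2 + \<eta> * real_of_ereal (r p)
                                  \<le> 1/2 * (norm (z - y))\<^sup>2 + \<eta> * real_of_ereal (r z)"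
    and z: "r z \<noteq> \<infinity>"
  shows "\<eta> * real_of_ereal (r p) + 1/2 * (norm (p - y))\<^sup>2 + 1/2 * (norm (z - p))\<^sup>2
           \<le> \<eta> * real_of_ereal (r z) + 1/2 * (norm (z - y))\<^sup>2"
proof -
  define \<rho> where "\<rho> = (\<lambda>x. real_of_ereal (r x))"
  define A where "A = (p - y) \<bullet> (z - p) + \<eta> * (\<rho> z - \<rho> p)"
  define B where "B = 1/2 * (norm (z - p))\<^sup>2"
  have "0 \<le> A"
  proof (rule nonneg_if_nonneg_affine_near_zero[of B])
    fix t :: real assume t: "0 < t" "t \<le> 1"
    define zt where "zt = (1 - t) *\<^sub>R p + t *\<^sub>R z"
    have zt: "r zt \<noteq> \<infinity>" "\<rho> zt \<le> (1 - t) * \<rho> p + t * \<rho> z"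
      using proper_closed_convex_convex_combination[OF pcc p z, of t] t
      unfolding zt_def \<rho>_def by auto
    have zt_y: "zt - y = (p - y) + t *\<^sub>R (z - p)"
      unfolding zt_def by (simp add: algebra_simps)
    have "(norm (zt - y))\<^sup>2 = (norm (p - y))\<^sup>2 + 2 * t * ((p - y) \<bullet> (z - p)) + t\<^sup>2 * (norm (z - p))\<^sup>2"
      unfolding zt_y power2_norm_add by (simp add: power_mult_distrib)
    moreover have "\<eta> * \<rho> zt \<le> \<eta> * ((1 - t) * \<rho> p + t * \<rho> z)"
      using zt(2) eta by (intro mult_left_mono) auto
    ultimately have "0 \<le> t * (A + t * B)"
      using pmin[OF zt(1)] unfolding A_def B_def \<rho>_def by (simp add: algebra_simps power2_eq_square)
    then show "0 \<le> A + t * B"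
      using t by (simp add: zero_le_mult_iff)
  qed (simp add: B_def)
  moreover have "(norm (z - y))\<^sup>2 = (norm (z - p))\<^sup>2 + 2 * ((z - p) \<bullet> (p - y)) + (norm (p - y))\<^sup>2"
    using power2_norm_add[of "z - p" "p - y"] by simp
  ultimately show ?thesis
    unfolding A_def B_def \<rho>_def by (simp add: inner_commute algebra_simps)
qed

lemma prox_eqI:
  fixes r :: "'a::euclidean_space \<Rightarrow> ereal"
  assumes pcc: "proper_closed_convex r" and eta: "\<eta> > 0" and p: "r p \<noteq> \<infinity>"
    and pmin: "\<And>z. r z \<noteq> \<infinity> \<Longrightarrow> 1/2 * (norm (p - y))\<^sup>2 + \<eta> * real_of_ereal (r p)
                                  \<le> 1/2 * (norm (z - y))\<^sup>2 + \<eta> * real_of_ereal (r z)"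
  shows "prox r \<eta> y = p"
  unfolding prox_def
proof (rule the_equality)
  note objective = prox_objective_ereal[OF pcc eta]
  show "\<forall>z. ereal (1/2 * (norm (p - y))\<^sup>2) + ereal \<eta> * r p
             \<le> ereal (1/2 * (norm (z - y))\<^sup>2) + ereal \<eta> * r z"
    using pmin p by (simp add: objective)
  fix x
  assume "\<forall>z. ereal (1/2 * (norm (x - y))\<^sup>2) + ereal \<eta> * r x
             \<le> ereal (1/2 * (norm (z - y))\<^sup>2) + ereal \<eta> * r z"
  then have "ereal (1/2 * (norm (x - y))\<^sup>2) + ereal \<eta> * r x
      \<le> ereal (1/2 * (norm (p - y))\<^sup>2) + ereal \<eta> * r p"
    by blast
  then have x: "r x \<noteq> \<infinity>"
    and "1/2 * (norm (x - y))\<^sup>2 + \<eta> * real_of_ereal (r x)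
           \<le> 1/2 * (norm (p - y))\<^sup>2 + \<eta> * real_of_ereal (r p)"
    using p by (auto simp: objective split: if_splits)
  with minimizer_three_point_inequality[OF pcc eta p pmin x] have "(norm (x - p))\<^sup>2 \<le> 0"
    by linarith
  then show "x = p" by simp
qed

lemma prox_three_point_inequality:
  fixes r :: "'a::euclidean_space \<Rightarrow> ereal"
  assumes pcc: "proper_closed_convex r" and eta: "\<eta> > 0"
  shows "r (prox r \<eta> y) \<noteq> \<infinity>"
    and "r z \<noteq> \<infinity> \<Longrightarrow>
           \<eta> * real_of_ereal (r (prox r \<eta> y)) + 1/2 * (norm (prox r \<eta> y - y))\<^sup>2
             + 1/2 * (norm (z - prox r \<eta> y))\<^sup>2
           \<le> \<eta> * real_of_ereal (r z) + 1/2 * (norm (z - y))\<^sup>2"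
proof -
  obtain p where p: "r p \<noteq> \<infinity>"
    and pmin: "\<And>z. r z \<noteq> \<infinity> \<Longrightarrow> 1/2 * (norm (p - y))\<^sup>2 + \<eta> * real_of_ereal (r p)
                                    \<le> 1/2 * (norm (z - y))\<^sup>2 + \<eta> * real_of_ereal (r z)"
    using prox_objective_has_minimizer[OF pcc eta] by blast
  have "prox r \<eta> y = p"
    using prox_eqI[OF pcc eta p pmin] by blast
  then show "r (prox r \<eta> y) \<noteq> \<infinity>"
    and "r z \<noteq> \<infinity> \<Longrightarrow>
           \<eta> * real_of_ereal (r (prox r \<eta> y)) + 1/2 * (norm (prox r \<eta> y - y))\<^sup>2
             + 1/2 * (norm (z - prox r \<eta> y))\<^sup>2
           \<le> \<eta> * real_of_ereal (r z) + 1/2 * (norm (z - y))\<^sup>2"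
    using p minimizer_three_point_inequality[OF pcc eta p pmin] by auto
qed

lemma prox_gradient_step_inequality:
  fixes r :: "'a::euclidean_space \<Rightarrow> ereal"
  assumes pcc: "proper_closed_convex r" and eta: "\<eta> > 0" and z: "r z \<noteq> \<infinity>"
    and p: "p = prox r \<eta> (y - \<eta> *\<^sub>R G)"
  shows "real_of_ereal (r p) + G \<bullet> (p - y) + 1 / (2 * \<eta>) * ((norm (p - y))\<^sup>2 + (norm (z - p))\<^sup>2)
           \<le> real_of_ereal (r z) + G \<bullet> (z - y) + 1 / (2 * \<eta>) * (norm (z - y))\<^sup>2"
proof -
  have expand: "(norm (w - (y - \<eta> *\<^sub>R G)))\<^sup>2 = (norm (w - y))\<^sup>2 + 2 * \<eta> * (G \<bullet> (w - y)) + \<eta>\<^sup>2 * (norm G)\<^sup>2"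
    for w
    using power2_norm_add[of "w - y" "\<eta> *\<^sub>R G"]
    by (simp add: inner_commute algebra_simps)
  have "\<eta> * real_of_ereal (r p) + 1/2 * (norm (p - (y - \<eta> *\<^sub>R G)))\<^sup>2 + 1/2 * (norm (z - p))\<^sup>2
      \<le> \<eta> * real_of_ereal (r z) + 1/2 * (norm (z - (y - \<eta> *\<^sub>R G)))\<^sup>2"
    unfolding p by (rule prox_three_point_inequality(2)[OF pcc eta z])
  then have "\<eta> * (real_of_ereal (r p) + G \<bullet> (p - y) + 1 / (2 * \<eta>) * ((norm (p - y))\<^sup>2 + (norm (z - p))\<^sup>2))
      \<le> \<eta> * (real_of_ereal (r z) + G \<bullet> (z - y) + 1 / (2 * \<eta>) * (norm (z - y))\<^sup>2)"
    unfolding expand using eta by (simp add: algebra_simps)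
  then show ?thesis
    using eta by simp
qed

lemma strongly_convex_combination:
  fixes f :: "'a::real_inner \<Rightarrow> real"
  assumes sc: "convex_on UNIV (\<lambda>y. f y - \<mu> / 2 * (norm y)\<^sup>2)" and t: "0 \<le> t" "t \<le> 1"
  shows "f ((1 - t) *\<^sub>R y + t *\<^sub>R w)
           \<le> (1 - t) * f y + t * f w - \<mu> / 2 * t * (1 - t) * (norm (y - w))\<^sup>2"
proof -
  have "f ((1 - t) *\<^sub>R y + t *\<^sub>R w) - \<mu> / 2 * (norm ((1 - t) *\<^sub>R y + t *\<^sub>R w))\<^sup>2
      \<le> (1 - t) * (f y - \<mu> / 2 * (norm y)\<^sup>2) + t * (f w - \<mu> / 2 * (norm w)\<^sup>2)"
    using convex_onD[OF sc, of t y w] t by simp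
  then show ?thesis
    unfolding power2_norm_convex_combination by (simp add: field_simps)
qed

lemma strong_convexity_le_smoothness:
  fixes f :: "'a::euclidean_space \<Rightarrow> real"
  assumes sc: "convex_on UNIV (\<lambda>y. f y - \<mu> / 2 * (norm y)\<^sup>2)"
    and upper: "\<And>y z. f z \<le> f y + gf y \<bullet> (z - y) + L / 2 * (norm (z - y))\<^sup>2"
  shows "\<mu> \<le> L"
proof -
  obtain b :: 'a where "b \<in> Basis"
    using nonempty_Basis by blast
  then have b: "norm b = 1" and "(norm (b + b))\<^sup>2 = 4"
    by (simp_all add: power2_norm_add)
  then have "f 0 \<le> 1/2 * f b + 1/2 * f (- b) - \<mu> / 2"
    using strongly_convex_combination[OF sc, of "1/2" b "- b"] by simp
  moreover have "f b \<le> f 0 + gf 0 \<bullet> b + L / 2" and "f (- b) \<le> f 0 - gf 0 \<bullet> b + L / 2"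
    using upper[where y=0 and z=b] upper[where y=0 and z="- b"] b by simp_all
  ultimately show ?thesis by linarith
qed

locale composite_problem =
  fixes f :: "'a::euclidean_space \<Rightarrow> real" and gf :: "'a \<Rightarrow> 'a"
    and r :: "'a \<Rightarrow> ereal" and xstar :: 'a and L \<mu> :: real
  assumes smooth: "\<And>y z. \<bar>f z - f y - gf y \<bullet> (z - y)\<bar> \<le> L / 2 * (norm (z - y))\<^sup>2"
    and strongly_convex: "convex_on UNIV (\<lambda>y. f y - \<mu> / 2 * (norm y)\<^sup>2)"
    and mu_pos: "\<mu> > 0"
    and r_pcc: "proper_closed_convex r"
    and xstar_min: "\<And>z. ereal (f xstar) + r xstar \<le> ereal (f z) + r z"
begin

definition objective :: "'a \<Rightarrow> ereal" where
  "objective y = ereal (f y) + r y"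

definition rval :: "'a \<Rightarrow> real" where
  "rval y = real_of_ereal (r y)"
  \<comment> \<open>junk value \<open>0\<close> where \<open>r y = \<infinity>\<close>; only used on the domain of \<open>r\<close>\<close>

lemma smooth_upper: "f z \<le> f y + gf y \<bullet> (z - y) + L / 2 * (norm (z - y))\<^sup>2"
  using smooth[of z y] by linarith

lemma smooth_lower: "f y + gf y \<bullet> (z - y) - L / 2 * (norm (z - y))\<^sup>2 \<le> f z"
  using smooth[of z y] by linarith

lemma mu_le_L: "\<mu> \<le> L"
  using strong_convexity_le_smoothness[OF strongly_convex smooth_upper] .

lemma xstar_dom: "r xstar \<noteq> \<infinity>"
proof
  assume "r xstar = \<infinity>"
  moreover obtain z where "r z \<noteq> \<infinity>"
    using r_pcc unfolding proper_closed_convex_def by blast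
  ultimately show False
    using xstar_min[of z] proper_closed_convex_ereal_real[OF r_pcc, of z]
    by (metis PInfty_neq_ereal(1) ereal_infty_less_eq(1) ereal_plus_eq_PInfty)
qed

lemma objective_real: "r y \<noteq> \<infinity> \<Longrightarrow> objective y = ereal (f y + rval y)"
  unfolding objective_def rval_def using proper_closed_convex_ereal_real[OF r_pcc]
  by (metis plus_ereal.simps(1))

lemma objective_gap_nonneg: "0 \<le> objective y - objective xstar"
  using xstar_min[of y] objective_real[OF xstar_dom]
  unfolding objective_def by (cases "ereal (f y) + r y") auto

end

locale piag = composite_problem +
  fixes \<eta> :: real and K :: nat and g x :: "nat \<Rightarrow> 'a"
  assumes eta_pos: "\<eta> > 0"
    and step_size: "\<eta> * L * (real K + 1) \<le> 1/3"
    and delayed_gradient: "\<And>k B. (\<And>s. s \<le> K \<Longrightarrow> s \<le> k \<Longrightarrow> norm (x (k - s) - x k) \<le> B) \<Longrightarrow>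
                             norm (g k - gf (x k)) \<le> L * B"
      \<comment> \<open>the aggregated gradient \<open>g k\<close> only uses iterates at most \<open>K\<close> steps old\<close>
    and iteration: "\<And>k. x (Suc k) = prox r \<eta> (x k - \<eta> *\<^sub>R g k)"
begin

definition gap :: "nat \<Rightarrow> real" where
  "gap k = f (x k) + rval (x k) - (f xstar + rval xstar)"

definition step :: "nat \<Rightarrow> real" where
  "step k = norm (x (Suc k) - x k)"

definition past_step :: "nat \<Rightarrow> nat \<Rightarrow> real" where
  "past_step k d = (if d < k then step (k - Suc d) else 0)"

definition recent_steps_sq :: "nat \<Rightarrow> real" where
  "recent_steps_sq k = (\<Sum>d<K. (past_step k d)\<^sup>2)"

text \<open>The weight \<open>K - d\<close> counts the later windows \<open>recent_steps_sq\<close> that will still contain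
  \<open>past_step k d\<close>, so that the weighted sum telescopes (\<open>weighted_recent_steps_sq_Suc\<close>).\<close>

definition weighted_recent_steps_sq :: "nat \<Rightarrow> real" where
  "weighted_recent_steps_sq k = (\<Sum>d<K. (real K - real d) * (past_step k d)\<^sup>2)"

definition \<theta> :: real where "\<theta> = \<eta> * \<mu> / (1 + \<eta> * \<mu> + \<eta> * L)"
definition \<alpha> :: real where "\<alpha> = \<eta> * L\<^sup>2 * real K / 2"
definition \<beta> :: real where "\<beta> = 1 / (1 - \<theta> * real K)"
definition \<gamma> :: real where "\<gamma> = 1 / (2 * \<eta>) - L / 2"

definition lyapunov :: "nat \<Rightarrow> real" where
  "lyapunov k = gap k + \<alpha> * \<beta> * weighted_recent_steps_sq k"

lemma step_size_bounds: "\<eta> * L \<le> 1/3" "\<eta> * L * real K \<le> 1/3" "\<eta> * \<mu> \<le> \<eta> * L"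
proof -
  have "0 \<le> \<eta> * L" "0 \<le> \<eta> * L * real K"
    using eta_pos mu_pos mu_le_L by simp_all
  moreover have "\<eta> * L * (real K + 1) = \<eta> * L * real K + \<eta> * L"
    by (simp add: algebra_simps)
  ultimately show "\<eta> * L \<le> 1/3" "\<eta> * L * real K \<le> 1/3"
    using step_size by linarith+
  show "\<eta> * \<mu> \<le> \<eta> * L"
    using eta_pos mu_le_L by simp
qed

lemma theta_bounds: "0 < \<theta>" "\<eta> * \<mu> / 2 \<le> \<theta>" "\<theta> \<le> \<eta> * \<mu>"
proof -
  define D where "D = 1 + \<eta> * \<mu> + \<eta> * L"
  have emu: "0 < \<eta> * \<mu>"
    using eta_pos mu_pos by simp
  moreover have D: "1 \<le> D" "D \<le> 2"
    unfolding D_def using step_size_bounds emu by linarith+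
  ultimately have "\<eta> * \<mu> / 2 \<le> \<eta> * \<mu> / D" "\<eta> * \<mu> / D \<le> \<eta> * \<mu> / 1"
    by (intro divide_left_mono; simp)+
  then show "0 < \<theta>" "\<eta> * \<mu> / 2 \<le> \<theta>" "\<theta> \<le> \<eta> * \<mu>"
    unfolding \<theta>_def D_def[symmetric] using emu D by simp_all
qed

lemma theta_le_third: "\<theta> \<le> 1/3"
  using theta_bounds step_size_bounds by linarith

lemma theta_K_le_third: "\<theta> * real K \<le> 1/3"
proof -
  have "\<theta> * real K \<le> \<eta> * L * real K"
    using theta_bounds step_size_bounds by (intro mult_right_mono) auto
  then show ?thesis
    using step_size_bounds by linarith
qed

lemma theta_identity: "\<theta> * (1 / \<eta> + L) = \<mu> * (1 - \<theta>)"
proof -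
  define D where "D = 1 + \<eta> * \<mu> + \<eta> * L"
  have D: "0 < D"
    unfolding D_def using step_size_bounds mult_pos_pos[OF eta_pos mu_pos] by linarith
  have "1 - \<theta> = (1 + \<eta> * L) / D"
    unfolding \<theta>_def D_def[symmetric] using D by (simp add: field_simps D_def)
  moreover have "1 / \<eta> + L = (1 + \<eta> * L) / \<eta>"
    using eta_pos by (simp add: field_simps)
  ultimately show ?thesis
    unfolding \<theta>_def D_def[symmetric] using eta_pos D by simp
qed

lemma theta_cancellation:
  "1 / (2 * \<eta>) * (\<theta>\<^sup>2 * \<Delta>) + L / 2 * (\<theta>\<^sup>2 * \<Delta>) = \<mu> / 2 * \<theta> * (1 - \<theta>) * \<Delta>"
proof -
  have "1 / (2 * \<eta>) * (\<theta>\<^sup>2 * \<Delta>) + L / 2 * (\<theta>\<^sup>2 * \<Delta>) = \<theta> * \<Delta> / 2 * (\<theta> * (1 / \<eta> + L))"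
    by (simp add: algebra_simps power2_eq_square)
  then show ?thesis
    unfolding theta_identity by (simp add: algebra_simps)
qed

lemma beta_facts: "\<beta> * (1 - \<theta> * real K) = 1" "1 \<le> \<beta>" "\<beta> \<le> 3/2"
proof -
  have "0 \<le> \<theta> * real K" "\<theta> * real K \<le> 1/3"
    using theta_bounds theta_K_le_third by simp_all
  then show "\<beta> * (1 - \<theta> * real K) = 1" "1 \<le> \<beta>" "\<beta> \<le> 3/2"
    unfolding \<beta>_def by (simp_all add: field_simps)
qed

lemma alpha_nonneg: "0 \<le> \<alpha>"
  unfolding \<alpha>_def using eta_pos by simp

lemma alpha_beta_K_le_gamma: "\<alpha> * \<beta> * real K \<le> \<gamma>"
proof -
  have "(\<eta> * L * real K)\<^sup>2 \<le> (1/3)\<^sup>2"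
    using step_size_bounds eta_pos mu_pos mu_le_L by (intro power_mono) auto
  have "\<alpha> * \<beta> * real K \<le> \<alpha> * (3/2) * real K"
    using beta_facts alpha_nonneg by (intro mult_right_mono mult_left_mono) auto
  also have "\<dots> = 3/2 * (\<eta> * L * real K)\<^sup>2 / (2 * \<eta>)"
    unfolding \<alpha>_def using eta_pos by (simp add: field_simps power2_eq_square)
  also have "\<dots> \<le> (1 - \<eta> * L) / (2 * \<eta>)"
    using \<open>(\<eta> * L * real K)\<^sup>2 \<le> (1/3)\<^sup>2\<close> step_size_bounds eta_pos
    by (intro divide_right_mono) (auto simp: power2_eq_square)
  also have "\<dots> = \<gamma>"
    unfolding \<gamma>_def using eta_pos by (simp add: field_simps)
  finally show ?thesis .
qed

lemma iterate_dom: "r (x (Suc k)) \<noteq> \<infinity>"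
  unfolding iteration by (rule prox_three_point_inequality(1)[OF r_pcc eta_pos])

lemma gap_objective:
  assumes "r (x k) \<noteq> \<infinity>"
  shows "objective (x k) - objective xstar = ereal (gap k)"
  using objective_real[OF assms] objective_real[OF xstar_dom] unfolding gap_def by simp

lemma gap_nonneg:
  assumes "r (x k) \<noteq> \<infinity>"
  shows "0 \<le> gap k"
  using xstar_min[of "x k"] objective_real[OF assms] objective_real[OF xstar_dom]
  unfolding gap_def objective_def by simp

lemma distance_to_delayed_iterate:
  assumes "s \<le> K" "s \<le> k"
  shows "norm (x (k - s) - x k) \<le> (\<Sum>d<K. past_step k d)"
proof -
  have "norm (x (k - s) - x k) = norm (x k - x (k - s))"
    by (rule norm_minus_commute)
  also have "\<dots> \<le> (\<Sum>d<s. norm (x (k - d) - x (k - Suc d)))"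
    using assms(2) by (rule norm_diff_le_sum_steps)
  also have "\<dots> = (\<Sum>d<s. past_step k d)"
    using assms by (intro sum.cong) (auto simp: past_step_def step_def Suc_diff_Suc)
  also have "\<dots> \<le> (\<Sum>d<K. past_step k d)"
    using assms by (intro sum_mono2) (auto simp: past_step_def step_def)
  finally show ?thesis .
qed

lemma gradient_error_sq: "(norm (g k - gf (x k)))\<^sup>2 \<le> L\<^sup>2 * (real K * recent_steps_sq k)"
proof -
  have "(\<Sum>d<K. past_step k d * 1)\<^sup>2 \<le> (\<Sum>d<K. (past_step k d)\<^sup>2) * (\<Sum>d<K. 1\<^sup>2)"
    by (rule Cauchy_Schwarz_ineq_sum)
  then have cs: "(\<Sum>d<K. past_step k d)\<^sup>2 \<le> real K * recent_steps_sq k"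
    unfolding recent_steps_sq_def by (simp add: mult.commute)
  have "norm (g k - gf (x k)) \<le> L * (\<Sum>d<K. past_step k d)"
    by (intro delayed_gradient distance_to_delayed_iterate)
  then have "(norm (g k - gf (x k)))\<^sup>2 \<le> (L * (\<Sum>d<K. past_step k d))\<^sup>2"
    by (intro power_mono) auto
  also have "\<dots> \<le> L\<^sup>2 * (real K * recent_steps_sq k)"
    unfolding power_mult_distrib using cs by (intro mult_left_mono) auto
  finally show ?thesis .
qed

lemma gradient_error_inner:
  "(g k - gf (x k)) \<bullet> w \<le> \<alpha> * recent_steps_sq k + 1 / (2 * \<eta>) * (norm w)\<^sup>2"
proof -
  have "\<eta> / 2 * (norm (g k - gf (x k)))\<^sup>2 \<le> \<eta> / 2 * (L\<^sup>2 * (real K * recent_steps_sq k))"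
    using gradient_error_sq eta_pos by (intro mult_left_mono) auto
  then show ?thesis
    using inner_le_young[OF eta_pos, of "g k - gf (x k)" w] unfolding \<alpha>_def
    by (simp add: algebra_simps)
qed

lemma gap_step:
  assumes dom: "r (x k) \<noteq> \<infinity>"
  shows "gap (Suc k) \<le> (1 - \<theta>) * gap k + \<alpha> * recent_steps_sq k - \<gamma> * (step k)\<^sup>2"
proof -
  define y p G where "y = x k" and "p = x (Suc k)" and "G = g k"
  define z where "z = (1 - \<theta>) *\<^sub>R y + \<theta> *\<^sub>R xstar"
  define \<Delta> where "\<Delta> = (norm (y - xstar))\<^sup>2"
  define c where "c = 1 / (2 * \<eta>)"
  have \<theta>: "0 \<le> \<theta>" "\<theta> \<le> 1"
    using theta_bounds theta_le_third by auto
  have D: "step k = norm (p - y)"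
    unfolding step_def p_def y_def ..
  have zy: "(norm (z - y))\<^sup>2 = \<theta>\<^sup>2 * \<Delta>"
  proof -
    have "z - y = \<theta> *\<^sub>R (xstar - y)"
      unfolding z_def by (simp add: algebra_simps)
    then show ?thesis
      unfolding \<Delta>_def by (simp add: power_mult_distrib norm_minus_commute)
  qed
  have z_dom: "r z \<noteq> \<infinity>" and r_convex: "rval z \<le> (1 - \<theta>) * rval y + \<theta> * rval xstar"
    using proper_closed_convex_convex_combination[OF r_pcc dom[folded y_def] xstar_dom \<theta>]
    unfolding z_def rval_def by auto
  have prox: "rval p + G \<bullet> (p - y) + c * (step k)\<^sup>2 + c * (norm (z - p))\<^sup>2
      \<le> rval z + G \<bullet> (z - y) + c * (\<theta>\<^sup>2 * \<Delta>)"
    using prox_gradient_step_inequality[OF r_pcc eta_pos z_dom iteration[of k], folded p_def y_def G_def]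
    unfolding rval_def c_def D zy by (simp add: distrib_left add.assoc)
  have upper: "f p \<le> f y + gf y \<bullet> (p - y) + L / 2 * (step k)\<^sup>2"
    unfolding D by (rule smooth_upper)
  have lower: "f y + gf y \<bullet> (z - y) - L / 2 * (\<theta>\<^sup>2 * \<Delta>) \<le> f z"
    using smooth_lower[of y z] unfolding zy .
  have strong: "f z \<le> (1 - \<theta>) * f y + \<theta> * f xstar - \<mu> / 2 * \<theta> * (1 - \<theta>) * \<Delta>"
    unfolding z_def \<Delta>_def using strongly_convex_combination[OF strongly_convex \<theta>] .
  have young: "(G - gf y) \<bullet> (z - p) \<le> \<alpha> * recent_steps_sq k + c * (norm (z - p))\<^sup>2"
    unfolding G_def y_def c_def by (rule gradient_error_inner)
  have inner: "G \<bullet> (z - y) - G \<bullet> (p - y) + gf y \<bullet> (p - y) = (G - gf y) \<bullet> (z - p) + gf y \<bullet> (z - y)"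
    by (simp add: inner_diff_left inner_diff_right)
  have cancel: "c * (\<theta>\<^sup>2 * \<Delta>) + L / 2 * (\<theta>\<^sup>2 * \<Delta>) = \<mu> / 2 * \<theta> * (1 - \<theta>) * \<Delta>"
    unfolding c_def by (rule theta_cancellation)
  have "\<gamma> * (step k)\<^sup>2 = c * (step k)\<^sup>2 - L / 2 * (step k)\<^sup>2"
    unfolding \<gamma>_def c_def by (simp add: algebra_simps)
  then have "f p + rval p \<le> (1 - \<theta>) * f y + \<theta> * f xstar + ((1 - \<theta>) * rval y + \<theta> * rval xstar)
      + \<alpha> * recent_steps_sq k - \<gamma> * (step k)\<^sup>2"
    using prox upper lower strong young inner cancel r_convex by linarith
  then show ?thesis
    unfolding gap_def p_def[symmetric] y_def[symmetric] by (simp add: algebra_simps)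
qed

lemma weighted_recent_steps_sq_nonneg: "0 \<le> weighted_recent_steps_sq k"
  unfolding weighted_recent_steps_sq_def by (intro sum_nonneg) auto

lemma weighted_recent_steps_sq_le: "weighted_recent_steps_sq k \<le> real K * recent_steps_sq k"
  unfolding weighted_recent_steps_sq_def recent_steps_sq_def sum_distrib_left
  by (intro sum_mono mult_right_mono) auto

lemma weighted_recent_steps_sq_Suc:
  "weighted_recent_steps_sq (Suc k) = real K * (step k)\<^sup>2 + weighted_recent_steps_sq k - recent_steps_sq k"
proof -
  have shift: "past_step (Suc k) 0 = step k" "past_step (Suc k) (Suc d) = past_step k d" for d
    by (simp_all add: past_step_def)
  have "(\<Sum>d<K. (real K - real d) * (past_step (Suc k) d)\<^sup>2)
      = real K * (step k)\<^sup>2 + (\<Sum>d<K. (real K - real d) * (past_step k d)\<^sup>2 - (past_step k d)\<^sup>2)"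
  proof (cases K)
    case (Suc K')
    have "(\<Sum>d<Suc K'. (real (Suc K') - real d) * (past_step (Suc k) d)\<^sup>2)
        = real (Suc K') * (step k)\<^sup>2 + (\<Sum>d<K'. (real K' - real d) * (past_step k d)\<^sup>2)"
      unfolding sum.lessThan_Suc_shift by (simp add: shift)
    also have "(\<Sum>d<K'. (real K' - real d) * (past_step k d)\<^sup>2)
        = (\<Sum>d<Suc K'. (real (Suc K') - real d) * (past_step k d)\<^sup>2 - (past_step k d)\<^sup>2)"
      by (simp add: algebra_simps)
    finally show ?thesis
      unfolding Suc .
  qed simp
  then show ?thesis
    unfolding weighted_recent_steps_sq_def recent_steps_sq_def by (simp add: sum_subtractf)
qed

lemma lyapunov_step:
  assumes "r (x k) \<noteq> \<infinity>"
  shows "lyapunov (Suc k) \<le> (1 - \<theta>) * lyapunov k"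
proof -
  define T S where "T = recent_steps_sq k" and "S = weighted_recent_steps_sq k"
  have "lyapunov (Suc k) = gap (Suc k) + \<alpha> * \<beta> * real K * (step k)\<^sup>2 + \<alpha> * \<beta> * S - \<alpha> * \<beta> * T"
    unfolding lyapunov_def weighted_recent_steps_sq_Suc T_def S_def by (simp add: algebra_simps)
  also have "\<dots> \<le> (1 - \<theta>) * gap k + \<alpha> * T - (\<gamma> - \<alpha> * \<beta> * real K) * (step k)\<^sup>2
      + \<alpha> * \<beta> * S - \<alpha> * \<beta> * T"
    using gap_step[OF assms] unfolding T_def by (simp add: algebra_simps)
  also have "\<dots> \<le> (1 - \<theta>) * gap k + \<alpha> * T + \<alpha> * \<beta> * S - \<alpha> * \<beta> * T"
    using alpha_beta_K_le_gamma by simp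
  also have "\<dots> \<le> (1 - \<theta>) * lyapunov k"
  proof -
    have "\<theta> * (\<alpha> * \<beta>) * S \<le> \<theta> * (\<alpha> * \<beta>) * (real K * T)"
      using weighted_recent_steps_sq_le theta_bounds alpha_nonneg beta_facts unfolding S_def T_def
      by (intro mult_left_mono) auto
    moreover have "\<beta> - 1 = \<theta> * \<beta> * real K"
      using beta_facts(1) by (simp add: algebra_simps)
    then have "\<alpha> * \<beta> * T - \<alpha> * T = \<theta> * (\<alpha> * \<beta>) * (real K * T)"
      by (metis (no_types, opaque_lifting) mult.commute mult.left_commute right_diff_distrib' mult.right_neutral)
    ultimately show ?thesis
      unfolding lyapunov_def S_def[symmetric] by (simp add: algebra_simps)
  qed
  finally show ?thesis .
qed

lemma gap_linear_convergence:
  assumes "r (x 0) \<noteq> \<infinity>"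
  shows "gap k \<le> (1 - \<theta>) ^ k * gap 0"
proof -
  have dom: "r (x j) \<noteq> \<infinity>" for j
    using assms iterate_dom by (cases j) auto
  have "lyapunov k \<le> (1 - \<theta>) ^ k * lyapunov 0"
  proof (induction k)
    case (Suc k)
    have "lyapunov (Suc k) \<le> (1 - \<theta>) * lyapunov k"
      by (rule lyapunov_step[OF dom])
    also have "\<dots> \<le> (1 - \<theta>) * ((1 - \<theta>) ^ k * lyapunov 0)"
      using Suc theta_le_third by (intro mult_left_mono) auto
    finally show ?case by simp
  qed simp
  moreover have "lyapunov 0 = gap 0"
    unfolding lyapunov_def weighted_recent_steps_sq_def past_step_def by simp
  moreover have "gap k \<le> lyapunov k"
    unfolding lyapunov_def
    using weighted_recent_steps_sq_nonneg alpha_nonneg beta_facts by simp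
  ultimately show ?thesis by (metis order_trans)
qed

lemma rate_bounds: "0 < 1 - \<eta> * \<mu> / 18" "1 - \<eta> * \<mu> / 18 \<le> 1"
  using step_size_bounds mult_pos_pos[OF eta_pos mu_pos] by linarith+

theorem objective_linear_convergence:
  "objective (x k) - objective xstar
     \<le> ereal ((1 - \<eta> * \<mu> / 18) ^ k) * (objective (x 0) - objective xstar)"
proof (cases "r (x 0) = \<infinity>")
  case True
  then show ?thesis
    using rate_bounds objective_real[OF xstar_dom] by (simp add: objective_def)
next
  case False
  have dom: "r (x k) \<noteq> \<infinity>"
    using False iterate_dom by (cases k) auto
  have "(1 - \<theta>) ^ k * gap 0 \<le> (1 - \<eta> * \<mu> / 18) ^ k * gap 0"
    using theta_bounds theta_le_third gap_nonneg[OF False]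
    by (intro mult_right_mono power_mono) auto
  with gap_linear_convergence[OF False] have "gap k \<le> (1 - \<eta> * \<mu> / 18) ^ k * gap 0"
    by (rule order_trans)
  then show ?thesis
    unfolding gap_objective[OF dom] gap_objective[OF False] by simp
qed

end

lemma incremental_composite_problem:
  fixes fi :: "nat \<Rightarrow> 'a::euclidean_space \<Rightarrow> real"
  assumes grad: "\<And>i y. i \<in> {1..m} \<Longrightarrow> (fi i has_derivative (\<lambda>h. gradfi i y \<bullet> h)) (at y)"
    and lip: "\<And>i y z. i \<in> {1..m} \<Longrightarrow> norm (gradfi i y - gradfi i z) \<le> Li i * norm (y - z)"
    and "\<mu> > 0"
    and "convex_on UNIV (\<lambda>y. (1 / real m) * (\<Sum>i=1..m. fi i y) - \<mu> / 2 * (norm y)\<^sup>2)"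
    and "proper_closed_convex r"
    and "\<And>z. ereal ((1 / real m) * (\<Sum>i=1..m. fi i xstar)) + r xstar
               \<le> ereal ((1 / real m) * (\<Sum>i=1..m. fi i z)) + r z"
  shows "composite_problem (\<lambda>y. (1 / real m) * (\<Sum>i=1..m. fi i y))
           (\<lambda>y. (1 / real m) *\<^sub>R (\<Sum>i=1..m. gradfi i y)) r xstar ((1 / real m) * (\<Sum>i=1..m. Li i)) \<mu>"
proof unfold_locales
  fix y z :: 'a
  have "\<bar>(1 / real m) * (\<Sum>i=1..m. fi i z) - (1 / real m) * (\<Sum>i=1..m. fi i y)
        - ((1 / real m) *\<^sub>R (\<Sum>i=1..m. gradfi i y)) \<bullet> (z - y)\<bar>
      = (1 / real m) * \<bar>(\<Sum>i=1..m. fi i z) - (\<Sum>i=1..m. fi i y) - (\<Sum>i=1..m. gradfi i y) \<bullet> (z - y)\<bar>"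
    unfolding inner_scaleR_left right_diff_distrib[symmetric] abs_mult by simp
  also have "\<dots> \<le> (1 / real m) * ((\<Sum>i=1..m. Li i) / 2 * (norm (z - y))\<^sup>2)"
    by (rule mult_left_mono[OF sum_lipschitz_gradient_quadratic_bound[OF grad lip]]) auto
  finally show "\<bar>(1 / real m) * (\<Sum>i=1..m. fi i z) - (1 / real m) * (\<Sum>i=1..m. fi i y)
        - ((1 / real m) *\<^sub>R (\<Sum>i=1..m. gradfi i y)) \<bullet> (z - y)\<bar>
      \<le> (1 / real m) * (\<Sum>i=1..m. Li i) / 2 * (norm (z - y))\<^sup>2"
    by simp
qed fact+

lemma incremental_delayed_gradient:
  fixes gradfi :: "nat \<Rightarrow> 'a::real_normed_vector \<Rightarrow> 'b::real_normed_vector"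
    and x :: "nat \<Rightarrow> 'a" and \<tau> :: "nat \<Rightarrow> nat \<Rightarrow> nat" and k K :: nat
  assumes lip: "\<And>i y z. i \<in> {1..m} \<Longrightarrow> norm (gradfi i y - gradfi i z) \<le> Li i * norm (y - z)"
    and Li: "\<And>i. i \<in> {1..m} \<Longrightarrow> Li i \<ge> 0"
    and delay: "\<And>i. k - K \<le> \<tau> i k \<and> \<tau> i k \<le> k"
    and near: "\<And>s. s \<le> K \<Longrightarrow> s \<le> k \<Longrightarrow> norm (x (k - s) - x k) \<le> B"
  shows "norm ((1 / real m) *\<^sub>R (\<Sum>i=1..m. gradfi i (x (\<tau> i k)))
              - (1 / real m) *\<^sub>R (\<Sum>i=1..m. gradfi i (x k)))
           \<le> (1 / real m) * (\<Sum>i=1..m. Li i) * B"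
proof -
  have "norm (x (\<tau> i k) - x k) \<le> B" for i
  proof -
    have "k - \<tau> i k \<le> K" "k - \<tau> i k \<le> k" "k - (k - \<tau> i k) = \<tau> i k"
      using delay[of i] by auto
    then show ?thesis
      using near by metis
  qed
  then have "norm ((\<Sum>i=1..m. gradfi i (x (\<tau> i k))) - (\<Sum>i=1..m. gradfi i (x k)))
      \<le> (\<Sum>i=1..m. Li i) * B"
    by (intro sum_lipschitz_gradient_perturbation lip Li)
  then have "1 / real m * norm ((\<Sum>i=1..m. gradfi i (x (\<tau> i k))) - (\<Sum>i=1..m. gradfi i (x k)))
      \<le> 1 / real m * ((\<Sum>i=1..m. Li i) * B)"
    by (rule mult_left_mono) simp
  then show ?thesis
    by (simp add: scaleR_diff_right[symmetric] mult.assoc)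
qed

lemma step_size_from_eta_bar:
  fixes a K :: nat
  assumes L: "0 < L" and "1 \<le> Q" "1 \<le> K" "3 \<le> a"
    and eta: "\<eta> \<le> 1 / (3 * L * (real K + 1)) *
                (1 / (144 * (real a * real K + 1) * real K * Q\<^sup>2)) powr (1 / (real a - 2))"
  shows "\<eta> * L * (real K + 1) \<le> 1/3"
proof -
  have "1 * 1 * 1 \<le> (real a * real K + 1) * real K * Q\<^sup>2"
    using assms by (intro mult_mono one_le_power) auto
  then have "1 \<le> 144 * (real a * real K + 1) * real K * Q\<^sup>2"
    by (simp only: mult.assoc)
  then have "(1 / (144 * (real a * real K + 1) * real K * Q\<^sup>2)) powr (1 / (real a - 2)) \<le> 1"
    using assms by (intro powr_le1) auto
  moreover have pos: "0 < 3 * L * (real K + 1)"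
    using L by simp
  ultimately have "1 / (3 * L * (real K + 1))
      * (1 / (144 * (real a * real K + 1) * real K * Q\<^sup>2)) powr (1 / (real a - 2))
      \<le> 1 / (3 * L * (real K + 1))"
    by (intro mult_left_le) simp_all
  then have "\<eta> \<le> 1 / (3 * L * (real K + 1))"
    using eta by linarith
  then have "\<eta> * (3 * L * (real K + 1)) \<le> 1"
    unfolding pos_le_divide_eq[OF pos] .
  then show ?thesis
    by (simp add: algebra_simps)
qed

lemma geometric_rate_le_restarted_rate:
  fixes A M :: ereal and a K k :: nat
  assumes "0 < \<rho>" "\<rho> \<le> 1" "0 \<le> A" "A \<le> M"
  shows "ereal (\<rho> ^ k) * A \<le> ereal (\<rho> powr ((real k + 1) / (real a * real K + 1) - 1)) * M"
proof -
  have "(real k + 1) / (real a * real K + 1) \<le> (real k + 1) / 1"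
    by (intro divide_left_mono) (auto simp: add_nonneg_pos)
  then have "\<rho> powr real k \<le> \<rho> powr ((real k + 1) / (real a * real K + 1) - 1)"
    using assms by (intro powr_mono') auto
  then show ?thesis
    using assms by (intro ereal_mult_mono) (auto simp: powr_realpow)
qed

theorem theorem2:
  fixes m K a :: nat
    and fi :: "nat \<Rightarrow> 'a::euclidean_space \<Rightarrow> real"
    and gradfi :: "nat \<Rightarrow> 'a \<Rightarrow> 'a"
    and Li :: "nat \<Rightarrow> real"
    and \<mu> \<eta> :: real
    and r :: "'a \<Rightarrow> ereal"
    and xstar :: 'a
    and \<tau> :: "nat \<Rightarrow> nat \<Rightarrow> nat"
    and x :: "nat \<Rightarrow> 'a"
  defines "f \<equiv> (\<lambda>y. (1 / real m) * (\<Sum>i=1..m. fi i y))"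
    and "L \<equiv> (1 / real m) * (\<Sum>i=1..m. Li i)"
    and "F \<equiv> (\<lambda>y. ereal ((1 / real m) * (\<Sum>i=1..m. fi i y)) + r y)"
    and "Q \<equiv> ((1 / real m) * (\<Sum>i=1..m. Li i)) / \<mu>"
    and "g \<equiv> (\<lambda>k. (1 / real m) *\<^sub>R (\<Sum>i=1..m. gradfi i (x (\<tau> i k))))"
  assumes m_pos: "m \<ge> 1"
    and grad: "\<And>i y. i \<in> {1..m} \<Longrightarrow> (fi i has_derivative (\<lambda>h. gradfi i y \<bullet> h)) (at y)"
    and Li_nonneg: "\<And>i. i \<in> {1..m} \<Longrightarrow> Li i \<ge> 0"
    and lip: "\<And>i y z. i \<in> {1..m} \<Longrightarrow> norm (gradfi i y - gradfi i z) \<le> Li i * norm (y - z)"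
    and mu_pos: "\<mu> > 0"
    and strong: "convex_on UNIV (\<lambda>y. f y - \<mu> / 2 * (norm y)\<^sup>2)"
    and r_pcc: "proper_closed_convex r"
    and xstar_min: "\<And>z. F xstar \<le> F z"
    and K_ge: "K \<ge> 1"
    and a_ge: "a \<ge> 3"
    and eta_pos: "\<eta> > 0"
    and eta_le: "\<eta> \<le> 1 / (3 * L * (real K + 1)) *
                   (1 / (144 * (real a * real K + 1) * real K * Q\<^sup>2)) powr (1 / (real a - 2))"
    and tau_bounds: "\<And>i k. k - K \<le> \<tau> i k \<and> \<tau> i k \<le> k"
    and iter: "\<And>k. x (Suc k) = prox r \<eta> (x k - \<eta> *\<^sub>R g k)"
  shows "\<forall>k \<ge> a * K + 1.
           F (x k) - F xstar \<le>
             ereal ((1 - \<eta> * \<mu> / 18) powr ((real k + 1) / (real a * real K + 1) - 1)) *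
             Max ((\<lambda>j. F (x j) - F xstar) ` {0..a * K})"
proof -
  define gf where "gf = (\<lambda>y. (1 / real m) *\<^sub>R (\<Sum>i=1..m. gradfi i y))"
  interpret composite_problem f gf r xstar L \<mu>
    unfolding f_def gf_def L_def
    by (rule incremental_composite_problem[OF grad lip mu_pos])
      (use strong r_pcc xstar_min in \<open>simp_all add: f_def F_def\<close>)
  have "0 < L" "1 \<le> Q"
    using mu_le_L mu_pos unfolding Q_def L_def[symmetric] by simp_all
  then have "\<eta> * L * (real K + 1) \<le> 1/3"
    using K_ge a_ge eta_le by (rule step_size_from_eta_bar)
  then interpret piag f gf r xstar L \<mu> \<eta> K g x
  proof unfold_locales
    fix k B
    assume "\<And>s. s \<le> K \<Longrightarrow> s \<le> k \<Longrightarrow> norm (x (k - s) - x k) \<le> B"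
    then show "norm (g k - gf (x k)) \<le> L * B"
      unfolding g_def gf_def L_def
      using incremental_delayed_gradient[where m=m and gradfi=gradfi and Li=Li and x=x and k=k
            and \<tau>=\<tau> and K=K and B=B, OF lip Li_nonneg tau_bounds] by blast
  qed (use eta_pos iter in auto)
  have F: "F = objective"
    using objective_def unfolding F_def f_def by (intro ext) simp
  \<comment> \<open>the bound holds for every \<open>k\<close>\<close>
  have "F (x 0) - F xstar \<le> Max ((\<lambda>j. F (x j) - F xstar) ` {0..a * K})"
    by (rule Max_ge) auto
  then have "ereal ((1 - \<eta> * \<mu> / 18) ^ k) * (F (x 0) - F xstar)
      \<le> ereal ((1 - \<eta> * \<mu> / 18) powr ((real k + 1) / (real a * real K + 1) - 1))
         * Max ((\<lambda>j. F (x j) - F xstar) ` {0..a * K})" for k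
    using rate_bounds objective_gap_nonneg unfolding F by (intro geometric_rate_le_restarted_rate)
  then show ?thesis
    using objective_linear_convergence order_trans unfolding F by blast
qed

end
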